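(* Let $f$ be an $n$-variable Boolean function. Then ${LDA}(f)=\min_{1\le k\le n}\mu_k(f+1)$. Furthermore, if $k\ge{LDA}(f)$, then $\mu_k(f+1)={LDA}(f)$.
   Context: An $n$-variable Boolean function is a map $\mathbb{F}_2^n\to\mathbb{F}_2$, with algebraic degree $\deg$ the degree of its algebraic normal form. ${LDA}(h)$ is the minimum algebraic degree of a nonzero $g$ with $h\cdot g=0$. For $1\le k\le n$, ${MUL}_k(h)=\{h\cdot g: g \text{ an } n\text{-variable Boolean function with } \deg(g)\le k\}$ and $\mu_k(h)$ is the minimum algebraic degree of the nonzero elements of ${MUL}_k(h)$. *)

theory Defs
  imports Main "HOL-Library.Extended_Nat"
begin

text \<open>A point x of F_2^n is identified
with its support {i < n. x_i = 1}, a subset of {0..<n}; the value 1 of F_2 is True.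
Functions are required to be False outside the points of F_2^n (extensionality), so
that n-variable Boolean functions correspond bijectively to elements of bfun n.\<close>

definition bfun :: "nat \<Rightarrow> (nat set \<Rightarrow> bool) set" where
  "bfun n = {f. \<forall>S. \<not> S \<subseteq> {0..<n} \<longrightarrow> \<not> f S}"

definition bzero :: "nat set \<Rightarrow> bool" where
  "bzero = (\<lambda>_. False)"

definition bmult :: "(nat set \<Rightarrow> bool) \<Rightarrow> (nat set \<Rightarrow> bool) \<Rightarrow> nat set \<Rightarrow> bool" where
  "bmult h g = (\<lambda>x. h x \<and> g x)"

text \<open>f + 1 (addition of the constant 1 in F_2), as n-variable function.\<close>
definition bplus1 :: "nat \<Rightarrow> (nat set \<Rightarrow> bool) \<Rightarrow> nat set \<Rightarrow> bool" where
  "bplus1 n f = (\<lambda>x. x \<subseteq> {0..<n} \<and> \<not> f x)"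

text \<open>Coefficient of the monomial prod_{i in S} x_i in the algebraic normal form
(Moebius transform): a_S = sum_{T subseteq S} f(T) mod 2.\<close>
definition anf_coeff :: "(nat set \<Rightarrow> bool) \<Rightarrow> nat set \<Rightarrow> bool" where
  "anf_coeff f S = odd (card {T. T \<subseteq> S \<and> f T})"

definition alg_deg :: "nat \<Rightarrow> (nat set \<Rightarrow> bool) \<Rightarrow> nat" where
  "alg_deg n f = Max ({card S | S. S \<subseteq> {0..<n} \<and> anf_coeff f S} \<union> {0})"

definition LDA :: "nat \<Rightarrow> (nat set \<Rightarrow> bool) \<Rightarrow> enat" where
  "LDA n h = (INF g \<in> {g \<in> bfun n. g \<noteq> bzero \<and> bmult h g = bzero}. enat (alg_deg n g))"

definition MUL :: "nat \<Rightarrow> nat \<Rightarrow> (nat set \<Rightarrow> bool) \<Rightarrow> (nat set \<Rightarrow> bool) set" where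
  "MUL n k h = {bmult h g | g. g \<in> bfun n \<and> alg_deg n g \<le> k}"

definition mu :: "nat \<Rightarrow> nat \<Rightarrow> (nat set \<Rightarrow> bool) \<Rightarrow> enat" where
  "mu n k h = (INF p \<in> MUL n k h - {bzero}. enat (alg_deg n p))"

end

theory Submission
  imports Defs
begin

text \<open>Since f (f + 1) = 0, every nonzero multiple of f + 1 annihilates f, so
LDA(f) \<le> \<mu>_k(f + 1) for every k. Conversely, an annihilator g of f satisfies
(f + 1) g = g, so a minimum-degree annihilator of f lies in MUL_k(f + 1) as soon as
k is at least its degree; since degrees never exceed n, this applies to k = n.\<close>

lemma alg_deg_le_nvars: "alg_deg n g \<le> n"
proof -
  have "card S \<le> n" if "S \<subseteq> {0..<n}" for S
    using card_mono[OF _ that] by simp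
  moreover have "finite ({card S | S. S \<subseteq> {0..<n} \<and> anf_coeff g S} \<union> {0})"
    by (rule finite_subset[of _ "{0..n}"]) (auto simp: calculation)
  ultimately show ?thesis
    unfolding alg_deg_def by (subst Max_le_iff) auto
qed

lemma INF_enat_attained:
  fixes h :: "'a \<Rightarrow> nat"
  assumes "(INF x\<in>A. enat (h x)) \<noteq> \<infinity>"
  obtains x where "x \<in> A" "(INF x\<in>A. enat (h x)) = enat (h x)"
proof -
  have "A \<noteq> {}"
    using assms by (auto simp: top_enat_def)
  then have "(INF x\<in>A. enat (h x)) \<in> (\<lambda>x. enat (h x)) ` A"
    by (auto intro: wellorder_InfI)
  then show ?thesis
    using that by blast
qed

lemma LDA_attained:
  assumes "LDA n f \<noteq> \<infinity>"
  obtains g where "g \<in> bfun n" "g \<noteq> bzero" "bmult f g = bzero"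
    and "LDA n f = enat (alg_deg n g)"
  using INF_enat_attained[of "alg_deg n"] assms that unfolding LDA_def by blast

lemma bmult_bplus1_in_bfun: "bmult (bplus1 n f) g \<in> bfun n"
  by (auto simp: bfun_def bmult_def bplus1_def)

lemma bmult_bplus1_annihilates: "bmult f (bmult (bplus1 n f) g) = bzero"
  by (auto simp: bmult_def bplus1_def bzero_def)

lemma bmult_bplus1_annihilator:
  assumes "g \<in> bfun n" and "bmult f g = bzero"
  shows "bmult (bplus1 n f) g = g"
proof
  fix x
  have "\<not> (f x \<and> g x)"
    using fun_cong[OF assms(2), of x] by (simp add: bmult_def bzero_def)
  then show "bmult (bplus1 n f) g x = g x"
    using assms(1) by (auto simp: bfun_def bmult_def bplus1_def)
qed

lemma LDA_le_mu: "LDA n f \<le> mu n k (bplus1 n f)"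
  unfolding mu_def
proof (rule INF_greatest)
  fix p
  assume "p \<in> MUL n k (bplus1 n f) - {bzero}"
  then have "p \<in> {g \<in> bfun n. g \<noteq> bzero \<and> bmult f g = bzero}"
    unfolding MUL_def using bmult_bplus1_in_bfun bmult_bplus1_annihilates by auto
  then show "LDA n f \<le> enat (alg_deg n p)"
    unfolding LDA_def by (rule INF_lower)
qed

lemma mu_le_annihilator_deg:
  assumes "g \<in> bfun n" "g \<noteq> bzero" "bmult f g = bzero" "alg_deg n g \<le> k"
  shows "mu n k (bplus1 n f) \<le> enat (alg_deg n g)"
proof -
  have "g \<in> MUL n k (bplus1 n f) - {bzero}"
    unfolding MUL_def using assms bmult_bplus1_annihilator[OF assms(1,3)] by auto
  then show ?thesis
    unfolding mu_def by (rule INF_lower)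
qed

lemma mu_eq_LDA:
  assumes "LDA n f \<le> enat k"
  shows "mu n k (bplus1 n f) = LDA n f"
proof (rule antisym)
  have "LDA n f \<noteq> \<infinity>"
    using assms by (cases "LDA n f") auto
  then obtain g where g: "g \<in> bfun n" "g \<noteq> bzero" "bmult f g = bzero"
    and deg: "LDA n f = enat (alg_deg n g)"
    by (rule LDA_attained)
  have "alg_deg n g \<le> k"
    using assms deg by simp
  then show "mu n k (bplus1 n f) \<le> LDA n f"
    using mu_le_annihilator_deg[OF g] deg by simp
qed (rule LDA_le_mu)

lemma mu_nvars_eq_LDA: "mu n n (bplus1 n f) = LDA n f"
proof (cases "LDA n f = \<infinity>")
  case True
  then show ?thesis
    using LDA_le_mu[of n f n] by simp
next
  case False
  then obtain g where "LDA n f = enat (alg_deg n g)"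
    by (rule LDA_attained)
  then have "LDA n f \<le> enat n"
    using alg_deg_le_nvars[of n g] by simp
  then show ?thesis
    by (rule mu_eq_LDA)
qed

theorem proposition9:
  fixes n :: nat and f :: "nat set \<Rightarrow> bool"
  assumes "1 \<le> n" and "f \<in> bfun n"
  shows "LDA n f = (INF k \<in> {1..n}. mu n k (bplus1 n f))
     \<and> (\<forall>k. 1 \<le> k \<and> k \<le> n \<and> LDA n f \<le> enat k \<longrightarrow> mu n k (bplus1 n f) = LDA n f)"
proof
  show "LDA n f = (INF k \<in> {1..n}. mu n k (bplus1 n f))"
  proof (rule antisym)
    show "LDA n f \<le> (INF k \<in> {1..n}. mu n k (bplus1 n f))"
      by (rule INF_greatest) (rule LDA_le_mu)
    have "(INF k \<in> {1..n}. mu n k (bplus1 n f)) \<le> mu n n (bplus1 n f)"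
      using assms(1) by (intro INF_lower) simp
    then show "(INF k \<in> {1..n}. mu n k (bplus1 n f)) \<le> LDA n f"
      by (simp add: mu_nvars_eq_LDA)
  qed
  show "\<forall>k. 1 \<le> k \<and> k \<le> n \<and> LDA n f \<le> enat k \<longrightarrow> mu n k (bplus1 n f) = LDA n f"
    using mu_eq_LDA by blast
qed

end
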